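(* Let $r>2$ be an integer, $\delta=1/r$, and define $\ell_1=3$, $\ell_i=2\ell_{i-1}-\lceil\delta\ell_{i-1}\rceil$ for $2\le i\le r$. Let $\gamma_i=T_{\rm rel}(\ell_i)$ and $\epsilon_i=(1-q)^{\lceil\delta\ell_i\rceil}$. Then for all $2\le i\le r$, $$\gamma_i\le\frac{2}{1-\sqrt{\epsilon_{i-1}}}\,\gamma_{i-1}.$$
   Context: Fix $q\in(0,1/2)$, $p=1-q$. $T_{\rm rel}(L)$ is the relaxation time (inverse spectral gap) of the East process on $\{1,\dots,L\}$: the Markov chain on $\{0,1\}^{\{1,\dots,L\}}$ with generator $\mathcal L f(\sigma)=\sum_{x}c_x(\sigma)[\pi_x(f)-f](\sigma)$, $c_1\equiv1$, $c_x(\sigma)=1-\sigma_{x-1}$ ($x\ge2$), $\pi_x(f)$ the average over $\sigma_x\sim$ Bernoulli$(p)$; the gap is $\inf_f\sum_x\pi(c_x\mathrm{Var}_xf)/\mathrm{Var}_\pi(f)$ with $\pi$ the product Bernoulli$(p)$ measure. *)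

theory Defs
  imports Complex_Main "HOL-Library.FuncSet"
begin

text \<open>Configurations: sigma :: nat => bool, with sigma x = True
  meaning occupation variable 1 (probability p = 1 - q), restricted to the finite
  set of extensional functions on {1..L}.\<close>

definition east_conf :: "nat \<Rightarrow> (nat \<Rightarrow> bool) set" where
  "east_conf L = PiE {1..L} (\<lambda>_. UNIV)"

definition east_pi :: "real \<Rightarrow> nat \<Rightarrow> (nat \<Rightarrow> bool) \<Rightarrow> real" where
  "east_pi q L \<sigma> = (\<Prod>x\<in>{1..L}. if \<sigma> x then 1 - q else q)"

definition east_E :: "real \<Rightarrow> nat \<Rightarrow> ((nat \<Rightarrow> bool) \<Rightarrow> real) \<Rightarrow> real" where
  "east_E q L f = (\<Sum>\<sigma>\<in>east_conf L. east_pi q L \<sigma> * f \<sigma>)"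

definition east_Var :: "real \<Rightarrow> nat \<Rightarrow> ((nat \<Rightarrow> bool) \<Rightarrow> real) \<Rightarrow> real" where
  "east_Var q L f = east_E q L (\<lambda>\<sigma>. (f \<sigma>)\<^sup>2) - (east_E q L f)\<^sup>2"

definition east_Var_x :: "real \<Rightarrow> nat \<Rightarrow> ((nat \<Rightarrow> bool) \<Rightarrow> real) \<Rightarrow> (nat \<Rightarrow> bool) \<Rightarrow> real" where
  "east_Var_x q x f \<sigma> =
     (1 - q) * (f (\<sigma>(x := True)))\<^sup>2 + q * (f (\<sigma>(x := False)))\<^sup>2
     - ((1 - q) * f (\<sigma>(x := True)) + q * f (\<sigma>(x := False)))\<^sup>2"

definition east_c :: "nat \<Rightarrow> (nat \<Rightarrow> bool) \<Rightarrow> real" where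
  "east_c x \<sigma> = (if x = 1 then 1 else if \<sigma> (x - 1) then 0 else 1)"

definition east_Dir :: "real \<Rightarrow> nat \<Rightarrow> ((nat \<Rightarrow> bool) \<Rightarrow> real) \<Rightarrow> real" where
  "east_Dir q L f = (\<Sum>x\<in>{1..L}. east_E q L (\<lambda>\<sigma>. east_c x \<sigma> * east_Var_x q x f \<sigma>))"

definition east_gap :: "real \<Rightarrow> nat \<Rightarrow> real" where
  "east_gap q L = (INF f \<in> {f. east_Var q L f \<noteq> 0}. east_Dir q L f / east_Var q L f)"

definition T_rel :: "real \<Rightarrow> nat \<Rightarrow> real" where
  "T_rel q L = 1 / east_gap q L"

text \<open>ell r i = l_i with l_1 = 3, l_i = 2 l_(i-1) - ceil(l_(i-1)/r); ell r 0 is unused.\<close>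
fun ell :: "nat \<Rightarrow> nat \<Rightarrow> nat" where
  "ell r 0 = 3"
| "ell r (Suc 0) = 3"
| "ell r (Suc (Suc n)) =
     2 * ell r (Suc n) - nat \<lceil>(1 / real r) * real (ell r (Suc n))\<rceil>"

definition eps :: "real \<Rightarrow> nat \<Rightarrow> nat \<Rightarrow> real" where
  "eps q r i = (1 - q) ^ nat \<lceil>(1 / real r) * real (ell r i)\<rceil>"

end

theory Submission
  imports Defs
begin

text \<open>Split \<open>{1..L}\<close>, \<open>L = 2 l - d\<close>, into \<open>A = {1..l}\<close> and \<open>B = {l + 1..L}\<close>. The law of total
  variance and a Cauchy-Schwarz argument give
  \<open>Var f \<le> (E[Var\<^sub>A f] + E[\<chi> Var\<^sub>B f]) / (1 - \<surd>\<epsilon>)\<close>, where \<open>\<chi>\<close> indicates an empty site among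
  the last \<open>d\<close> sites of \<open>A\<close>, an event of probability \<open>1 - \<epsilon>\<close> with \<open>\<epsilon> = (1 - q)\<^sup>d\<close>. Both terms are
  bounded by \<open>Dir f / gap(l)\<close>: the first by the Poincare inequality on \<open>A\<close>, the second because,
  if \<open>x\<close> is the leftmost empty site of the overlap, the East constraint at \<open>x + 1\<close> is satisfied
  and the block \<open>{x + 1..L}\<close>, of length at most \<open>l\<close>, relaxes like an East process of its own.
  Hence \<open>gap(L) \<ge> (1 - \<surd>\<epsilon>) gap(l) / 2\<close>.\<close>

section \<open>Conditional expectations over finitely many sites\<close>

definition site_avg :: "real \<Rightarrow> nat \<Rightarrow> ((nat \<Rightarrow> bool) \<Rightarrow> real) \<Rightarrow> (nat \<Rightarrow> bool) \<Rightarrow> real" where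
  "site_avg q x g \<sigma> = (1 - q) * g (\<sigma>(x := True)) + q * g (\<sigma>(x := False))"

text \<open>\<open>cexp q xs g \<sigma>\<close> is the conditional expectation of \<open>g\<close> under the Bernoulli\<open>(1 - q)\<close>
  product measure on the sites in \<open>xs\<close>, given the values of \<open>\<sigma>\<close> at all other sites.\<close>

definition cexp :: "real \<Rightarrow> nat list \<Rightarrow> ((nat \<Rightarrow> bool) \<Rightarrow> real) \<Rightarrow> (nat \<Rightarrow> bool) \<Rightarrow> real" where
  "cexp q xs g = foldr (site_avg q) xs g"

definition cvar :: "real \<Rightarrow> nat list \<Rightarrow> ((nat \<Rightarrow> bool) \<Rightarrow> real) \<Rightarrow> (nat \<Rightarrow> bool) \<Rightarrow> real" where
  "cvar q xs g \<sigma> = cexp q xs (\<lambda>\<tau>. (g \<tau>)\<^sup>2) \<sigma> - (cexp q xs g \<sigma>)\<^sup>2"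

definition indep_of :: "nat set \<Rightarrow> ((nat \<Rightarrow> bool) \<Rightarrow> real) \<Rightarrow> bool" where
  "indep_of S g \<longleftrightarrow> (\<forall>\<sigma> x b. x \<in> S \<longrightarrow> g (\<sigma>(x := b)) = g \<sigma>)"

lemma cexp_Nil [simp]: "cexp q [] g = g"
  by (simp add: cexp_def)

lemma cexp_Cons [simp]: "cexp q (x # xs) g = site_avg q x (cexp q xs g)"
  by (simp add: cexp_def)

lemma cexp_append: "cexp q (xs @ ys) g = cexp q xs (cexp q ys g)"
  by (simp add: cexp_def)

lemma site_avg_commute: "site_avg q x (site_avg q y g) = site_avg q y (site_avg q x g)"
  by (rule ext, cases "x = y") (auto simp: site_avg_def fun_upd_twist algebra_simps)

lemma site_avg_idem: "site_avg q x (site_avg q x g) = site_avg q x g"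
  by (rule ext) (simp add: site_avg_def algebra_simps)

lemma cexp_site_avg_commute: "cexp q xs (site_avg q y g) = site_avg q y (cexp q xs g)"
  by (induction xs) (simp_all add: site_avg_commute)

lemma cexp_commute: "cexp q xs (cexp q ys g) = cexp q ys (cexp q xs g)"
  by (induction ys) (simp_all add: cexp_site_avg_commute)

lemma cexp_site_avg_absorb: "y \<in> set xs \<Longrightarrow> cexp q xs (site_avg q y g) = cexp q xs g"
proof (induction xs)
  case (Cons z zs)
  show ?case
  proof (cases "y \<in> set zs")
    case False
    with Cons.prems have "y = z" by simp
    then show ?thesis by (simp add: cexp_site_avg_commute site_avg_idem)
  qed (use Cons in simp)
qed simp

lemma cexp_absorb: "set ys \<subseteq> set xs \<Longrightarrow> cexp q xs (cexp q ys g) = cexp q xs g"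
  by (induction ys) (simp_all add: cexp_site_avg_absorb)

lemma cexp_linear:
  "cexp q xs (\<lambda>\<sigma>. a * g \<sigma> + b * h \<sigma>) = (\<lambda>\<sigma>. a * cexp q xs g \<sigma> + b * cexp q xs h \<sigma>)"
  by (induction xs) (simp_all add: site_avg_def algebra_simps)

lemma cexp_add: "cexp q xs (\<lambda>\<sigma>. g \<sigma> + h \<sigma>) \<sigma> = cexp q xs g \<sigma> + cexp q xs h \<sigma>"
  using cexp_linear[of q xs 1 g 1 h] by simp

lemma cexp_diff: "cexp q xs (\<lambda>\<sigma>. g \<sigma> - h \<sigma>) \<sigma> = cexp q xs g \<sigma> - cexp q xs h \<sigma>"
  using cexp_linear[of q xs 1 g "-1" h] by simp

lemma cexp_cmult: "cexp q xs (\<lambda>\<sigma>. c * g \<sigma>) \<sigma> = c * cexp q xs g \<sigma>"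
  using cexp_linear[of q xs c g 0 g] by simp

lemma cexp_divide: "cexp q xs (\<lambda>\<sigma>. g \<sigma> / c) \<sigma> = cexp q xs g \<sigma> / c"
  using cexp_cmult[of q xs "1 / c" g \<sigma>] by simp

lemma cexp_const: "cexp q xs (\<lambda>\<sigma>. c) \<sigma> = c"
proof -
  have "cexp q xs (\<lambda>\<sigma>. c) = (\<lambda>\<sigma>. c)"
    by (induction xs) (simp_all add: site_avg_def algebra_simps)
  then show ?thesis by simp
qed

lemma cexp_sum: "cexp q xs (\<lambda>\<sigma>. \<Sum>i\<in>I. g i \<sigma>) \<sigma> = (\<Sum>i\<in>I. cexp q xs (g i) \<sigma>)"
proof -
  have "cexp q xs (\<lambda>\<sigma>. \<Sum>i\<in>I. g i \<sigma>) = (\<lambda>\<sigma>. \<Sum>i\<in>I. cexp q xs (g i) \<sigma>)"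
    by (induction xs) (simp_all add: site_avg_def sum.distrib sum_distrib_left)
  then show ?thesis by simp
qed

lemma cexp_mono:
  assumes "0 \<le> q" "q \<le> 1" "\<And>\<sigma>. g \<sigma> \<le> h \<sigma>"
  shows "cexp q xs g \<sigma> \<le> cexp q xs h \<sigma>"
  using assms(3)
proof (induction xs arbitrary: g h \<sigma>)
  case (Cons x xs)
  have "cexp q xs g \<tau> \<le> cexp q xs h \<tau>" for \<tau> using Cons by blast
  from this[of "\<sigma>(x := True)"] this[of "\<sigma>(x := False)"] show ?case
    using assms(1,2) by (simp add: site_avg_def add_mono mult_left_mono)
qed simp

lemma cexp_nonneg: "0 \<le> q \<Longrightarrow> q \<le> 1 \<Longrightarrow> (\<And>\<sigma>. 0 \<le> g \<sigma>) \<Longrightarrow> 0 \<le> cexp q xs g \<sigma>"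
  using cexp_mono[of q "\<lambda>_. 0" g xs \<sigma>] cexp_const[of q xs 0 \<sigma>] by simp

lemma indep_of_mono: "indep_of S g \<Longrightarrow> T \<subseteq> S \<Longrightarrow> indep_of T g"
  unfolding indep_of_def by blast

lemma indep_of_Un: "indep_of S g \<Longrightarrow> indep_of T g \<Longrightarrow> indep_of (S \<union> T) g"
  unfolding indep_of_def by blast

lemma indep_of_comp: "indep_of S g \<Longrightarrow> indep_of S (\<lambda>\<sigma>. F (g \<sigma>))"
  unfolding indep_of_def by simp

lemma indep_of_comp2: "indep_of S g \<Longrightarrow> indep_of S h \<Longrightarrow> indep_of S (\<lambda>\<sigma>. F (g \<sigma>) (h \<sigma>))"
  unfolding indep_of_def by simp

lemma cexp_indep: "indep_of (set xs) g \<Longrightarrow> cexp q xs g = g"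
  by (induction xs) (auto simp: site_avg_def indep_of_def algebra_simps intro: indep_of_mono)

lemma cexp_append_indep: "indep_of (set ys) h \<Longrightarrow> cexp q (xs @ ys) h = cexp q xs h"
  by (simp add: cexp_append cexp_indep)

lemma indep_of_site_avg: "indep_of S g \<Longrightarrow> indep_of S (site_avg q y g)"
  unfolding indep_of_def site_avg_def
  by (metis fun_upd_twist fun_upd_upd)

lemma indep_of_cexp: "indep_of S g \<Longrightarrow> indep_of S (cexp q xs g)"
  by (induction xs) (simp_all add: indep_of_site_avg)

lemma indep_of_cexp_own: "indep_of (set xs) (cexp q xs g)"
proof (induction xs)
  case (Cons x xs)
  have "indep_of {x} (site_avg q x (cexp q xs g))"
    by (simp add: indep_of_def site_avg_def)
  with Cons show ?case
    using indep_of_Un[of "{x}"] indep_of_site_avg by fastforce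
qed (simp add: indep_of_def)

lemma cexp_mult_indep:
  assumes "indep_of (set xs) c"
  shows "cexp q xs (\<lambda>\<sigma>. c \<sigma> * g \<sigma>) \<sigma> = c \<sigma> * cexp q xs g \<sigma>"
proof -
  have "cexp q xs (\<lambda>\<sigma>. c \<sigma> * g \<sigma>) = (\<lambda>\<sigma>. c \<sigma> * cexp q xs g \<sigma>)"
    using assms
  proof (induction xs)
    case (Cons x xs)
    then have IH: "cexp q xs (\<lambda>\<sigma>. c \<sigma> * g \<sigma>) = (\<lambda>\<sigma>. c \<sigma> * cexp q xs g \<sigma>)"
      using indep_of_mono by fastforce
    have "c (\<sigma>(x := b)) = c \<sigma>" for \<sigma> b
      using Cons.prems by (simp add: indep_of_def)
    then show ?case by (simp add: IH site_avg_def algebra_simps)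
  qed simp
  then show ?thesis by simp
qed

lemma cexp_mult_indep_right:
  "indep_of (set xs) c \<Longrightarrow> cexp q xs (\<lambda>\<sigma>. g \<sigma> * c \<sigma>) \<sigma> = cexp q xs g \<sigma> * c \<sigma>"
  using cexp_mult_indep[of xs c q g \<sigma>] by (simp add: mult.commute)

lemma indep_of_agree:
  assumes "indep_of (set ys) h" "\<And>y. y \<notin> set ys \<Longrightarrow> \<sigma> y = \<sigma>' y"
  shows "h \<sigma> = h \<sigma>'"
  using assms
proof (induction ys arbitrary: \<sigma>)
  case Nil
  then have "\<sigma> = \<sigma>'" by auto
  then show ?case by simp
next
  case (Cons z zs)
  have "h \<sigma> = h (\<sigma>(z := \<sigma>' z))"
    using Cons.prems(1) by (simp add: indep_of_def)
  also have "\<dots> = h \<sigma>'"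
    using Cons.prems by (intro Cons.IH) (auto intro: indep_of_mono)
  finally show ?case .
qed

lemma cexp_transport:
  assumes "\<And>\<tau> x b. x \<in> set xs \<Longrightarrow> H (\<tau>(x := b)) = (H \<tau>)(\<phi> x := b)"
  shows "cexp q xs (\<lambda>\<tau>. g (H \<tau>)) \<tau> = cexp q (map \<phi> xs) g (H \<tau>)"
  using assms by (induction xs arbitrary: \<tau>) (simp_all add: site_avg_def)

lemma quadratic_nonneg_discriminant:
  fixes A B C :: real
  assumes nonneg: "\<And>t. 0 \<le> t\<^sup>2 * A - 2 * t * B + C" and "0 \<le> A"
  shows "B\<^sup>2 \<le> A * C"
proof (cases "A = 0")
  case True
  with nonneg[of "(C + 1) / (2 * B)"] show ?thesis
    by (cases "B = 0") (simp_all add: field_simps)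
next
  case False
  have "(B / A)\<^sup>2 * A - 2 * (B / A) * B + C = C - B\<^sup>2 / A"
    using False by (simp add: field_simps power2_eq_square)
  with nonneg[of "B / A"] have "B\<^sup>2 / A \<le> C" by simp
  then show ?thesis using False \<open>0 \<le> A\<close> by (simp add: divide_le_eq mult.commute)
qed

lemma cexp_Cauchy_Schwarz:
  assumes "0 \<le> q" "q \<le> 1"
  shows "(cexp q xs (\<lambda>\<sigma>. g \<sigma> * h \<sigma>) \<sigma>)\<^sup>2
    \<le> cexp q xs (\<lambda>\<sigma>. (g \<sigma>)\<^sup>2) \<sigma> * cexp q xs (\<lambda>\<sigma>. (h \<sigma>)\<^sup>2) \<sigma>"
proof (rule quadratic_nonneg_discriminant)
  fix t :: real
  have "(\<lambda>\<tau>. (t * g \<tau> - h \<tau>)\<^sup>2) = (\<lambda>\<tau>. (t\<^sup>2 * (g \<tau>)\<^sup>2 - (2 * t) * (g \<tau> * h \<tau>)) + (h \<tau>)\<^sup>2)"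
    by (rule ext) (simp add: power2_eq_square algebra_simps)
  moreover have "0 \<le> cexp q xs (\<lambda>\<tau>. (t * g \<tau> - h \<tau>)\<^sup>2) \<sigma>"
    using assms by (intro cexp_nonneg) auto
  ultimately show "0 \<le> t\<^sup>2 * cexp q xs (\<lambda>\<sigma>. (g \<sigma>)\<^sup>2) \<sigma> - 2 * t * cexp q xs (\<lambda>\<sigma>. g \<sigma> * h \<sigma>) \<sigma>
      + cexp q xs (\<lambda>\<sigma>. (h \<sigma>)\<^sup>2) \<sigma>"
    by (simp add: cexp_add cexp_diff cexp_cmult)
qed (use assms in \<open>auto intro: cexp_nonneg\<close>)

lemma cvar_nonneg: "0 \<le> q \<Longrightarrow> q \<le> 1 \<Longrightarrow> 0 \<le> cvar q xs g \<sigma>"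
  using cexp_Cauchy_Schwarz[of q xs g "\<lambda>_. 1" \<sigma>] cexp_const[of q xs 1 \<sigma>]
  by (simp add: cvar_def)

lemma indep_of_cvar:
  assumes "indep_of S g"
  shows "indep_of S (cvar q xs g)"
proof -
  have "indep_of S (cexp q xs (\<lambda>\<tau>. (g \<tau>)\<^sup>2))"
    using indep_of_comp[OF assms, of "\<lambda>x. x\<^sup>2"] by (rule indep_of_cexp)
  moreover have "indep_of S (cexp q xs g)"
    using assms by (rule indep_of_cexp)
  ultimately show ?thesis
    unfolding cvar_def[abs_def] by (rule indep_of_comp2)
qed

lemma cvar_indep:
  assumes "indep_of (set xs) g"
  shows "cvar q xs g \<sigma> = 0"
  using cexp_indep[OF assms] cexp_indep[OF indep_of_comp[OF assms, of "\<lambda>x. x\<^sup>2"]]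
  by (simp add: cvar_def)

lemma cexp_sq_dev: "cexp q xs (\<lambda>\<tau>. (g \<tau> - cexp q xs g \<tau>)\<^sup>2) \<sigma> = cvar q xs g \<sigma>"
proof -
  have own: "indep_of (set xs) (cexp q xs g)" by (rule indep_of_cexp_own)
  have "(\<lambda>\<tau>. (g \<tau> - cexp q xs g \<tau>)\<^sup>2)
      = (\<lambda>\<tau>. ((g \<tau>)\<^sup>2 - 2 * (cexp q xs g \<tau> * g \<tau>)) + (cexp q xs g \<tau>)\<^sup>2)"
    by (rule ext) (simp add: power2_eq_square algebra_simps)
  then show ?thesis
    using cexp_indep[OF indep_of_comp[OF own, of "\<lambda>x. x\<^sup>2"]]
    by (simp add: cexp_add cexp_diff cexp_cmult cexp_mult_indep[OF own] cvar_def power2_eq_square)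
qed

lemma cvar_total_variance:
  assumes "set ys \<subseteq> set xs"
  shows "cvar q xs g \<sigma>
    = cexp q xs (cvar q ys g) \<sigma> + cexp q xs (\<lambda>\<tau>. (cexp q ys g \<tau> - cexp q xs g \<tau>)\<^sup>2) \<sigma>"
proof -
  have "cexp q xs (\<lambda>\<tau>. (cexp q ys g \<tau> - cexp q xs g \<tau>)\<^sup>2) \<sigma> = cvar q xs (cexp q ys g) \<sigma>"
    using cexp_sq_dev[of q xs "cexp q ys g" \<sigma>] by (simp add: cexp_absorb[OF assms])
  then show ?thesis
    unfolding cvar_def[of q ys g, abs_def]
    by (simp add: cexp_diff cvar_def cexp_absorb[OF assms])
qed

lemma cexp_cvar_le:
  assumes "0 \<le> q" "q \<le> 1" "set ys \<subseteq> set xs"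
  shows "cexp q xs (cvar q ys g) \<sigma> \<le> cvar q xs g \<sigma>"
  using cvar_total_variance[OF assms(3), of q g \<sigma>] cexp_nonneg[OF assms(1,2)] by fastforce

lemma cexp_sq_dev_le:
  assumes "0 \<le> q" "q \<le> 1" "set ys \<subseteq> set xs"
  shows "cexp q xs (\<lambda>\<tau>. (g \<tau> - cexp q ys g \<tau>)\<^sup>2) \<sigma> \<le> cexp q xs (\<lambda>\<tau>. (g \<tau>)\<^sup>2) \<sigma>"
proof -
  have "cexp q xs (\<lambda>\<tau>. (g \<tau> - cexp q ys g \<tau>)\<^sup>2) \<sigma>
      = cexp q xs (cexp q ys (\<lambda>\<tau>. (g \<tau> - cexp q ys g \<tau>)\<^sup>2)) \<sigma>"
    by (simp add: cexp_absorb[OF assms(3)])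
  also have "cexp q ys (\<lambda>\<tau>. (g \<tau> - cexp q ys g \<tau>)\<^sup>2) = cvar q ys g"
    by (rule ext) (rule cexp_sq_dev)
  also have "cexp q xs (cvar q ys g) \<sigma>
      = cexp q xs (\<lambda>\<tau>. (g \<tau>)\<^sup>2) \<sigma> - cexp q xs (\<lambda>\<tau>. (cexp q ys g \<tau>)\<^sup>2) \<sigma>"
    unfolding cvar_def[abs_def] cexp_diff cexp_absorb[OF assms(3)] ..
  also have "\<dots> \<le> cexp q xs (\<lambda>\<tau>. (g \<tau>)\<^sup>2) \<sigma>"
    using assms by (simp add: cexp_nonneg)
  finally show ?thesis .
qed

lemma indep_of_cvar_own: "indep_of (set xs) (cvar q xs g)"
proof -
  have "indep_of (set xs) (cexp q xs (\<lambda>\<tau>. (g \<tau>)\<^sup>2))" "indep_of (set xs) (cexp q xs g)"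
    by (rule indep_of_cexp_own)+
  then show ?thesis
    unfolding cvar_def[abs_def] by (rule indep_of_comp2)
qed

section \<open>The East process through conditional expectations\<close>

lemma east_pi_upd:
  assumes "\<tau> \<in> east_conf n"
  shows "east_pi q (Suc n) (\<tau>(Suc n := y)) = east_pi q n \<tau> * (if y then 1 - q else q)"
proof -
  have "{1..Suc n} = insert (Suc n) {1..n}" by auto
  then have "east_pi q (Suc n) (\<tau>(Suc n := y))
      = (if y then 1 - q else q) * (\<Prod>x\<in>{1..n}. if (\<tau>(Suc n := y)) x then 1 - q else q)"
    unfolding east_pi_def by simp
  also have "(\<Prod>x\<in>{1..n}. if (\<tau>(Suc n := y)) x then 1 - q else q) = east_pi q n \<tau>"
    unfolding east_pi_def by (rule prod.cong) auto
  finally show ?thesis by (simp only: mult.commute)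
qed

text \<open>Configurations in \<open>east_conf n\<close> are \<open>undefined\<close> off \<open>{1..n}\<close>, so the global expectation
  is the conditional one evaluated at the constant configuration \<open>\<lambda>_. undefined\<close>.\<close>

lemma east_E_eq_cexp: "east_E q n g = cexp q [1..<Suc n] g (\<lambda>_. undefined)"
proof (induction n arbitrary: g)
  case 0
  have "east_conf 0 = {\<lambda>_. undefined}" unfolding east_conf_def by simp
  then show ?case unfolding east_E_def east_pi_def by simp
next
  case (Suc n)
  let ?h = "\<lambda>(y::bool, \<tau>::nat \<Rightarrow> bool). \<tau>(Suc n := y)"
  have conf: "east_conf (Suc n) = ?h ` (UNIV \<times> east_conf n)"
    unfolding east_conf_def using PiE_insert_eq[of "Suc n" "{1..n}" "\<lambda>_. UNIV :: bool set"]
    by (simp add: atLeastAtMostSuc_conv)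
  have inj: "inj_on ?h (UNIV \<times> east_conf n)"
    unfolding east_conf_def using inj_combinator[of "Suc n" "{1..n}" "\<lambda>_. UNIV :: bool set"] by simp
  have "east_E q (Suc n) g
      = (\<Sum>y\<in>UNIV. \<Sum>\<tau>\<in>east_conf n. east_pi q (Suc n) (\<tau>(Suc n := y)) * g (\<tau>(Suc n := y)))"
    unfolding east_E_def conf sum.reindex[OF inj] sum.cartesian_product
    by (intro sum.cong) auto
  also have "\<dots> = (\<Sum>\<tau>\<in>east_conf n. \<Sum>y\<in>UNIV. east_pi q (Suc n) (\<tau>(Suc n := y)) * g (\<tau>(Suc n := y)))"
    by (rule sum.swap)
  also have "\<dots> = (\<Sum>\<tau>\<in>east_conf n. east_pi q n \<tau> * site_avg q (Suc n) g \<tau>)"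
    by (rule sum.cong) (simp_all add: east_pi_upd UNIV_bool site_avg_def algebra_simps)
  also have "\<dots> = cexp q [1..<Suc n] (site_avg q (Suc n) g) (\<lambda>_. undefined)"
    using Suc.IH unfolding east_E_def .
  finally show ?case by (simp add: cexp_append)
qed

lemma east_Var_eq_cvar: "east_Var q n f = cvar q [1..<Suc n] f (\<lambda>_. undefined)"
  unfolding east_Var_def cvar_def east_E_eq_cexp ..

definition site_dir :: "real \<Rightarrow> ((nat \<Rightarrow> bool) \<Rightarrow> real) \<Rightarrow> nat \<Rightarrow> (nat \<Rightarrow> bool) \<Rightarrow> real" where
  "site_dir q f x \<sigma> = east_c x \<sigma> * cvar q [x] f \<sigma>"

lemma east_Dir_eq_cexp:
  "east_Dir q n f = (\<Sum>x\<in>{1..n}. cexp q [1..<Suc n] (site_dir q f x) (\<lambda>_. undefined))"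
proof -
  have "east_Var_x q x f \<sigma> = cvar q [x] f \<sigma>" for x \<sigma>
    by (simp add: east_Var_x_def cvar_def site_avg_def)
  then show ?thesis
    unfolding east_Dir_def east_E_eq_cexp site_dir_def by simp
qed

lemma site_dir_nonneg: "0 \<le> q \<Longrightarrow> q \<le> 1 \<Longrightarrow> 0 \<le> site_dir q f x \<sigma>"
  unfolding site_dir_def east_c_def by (simp add: cvar_nonneg)

lemma east_Var_nonneg: "0 \<le> q \<Longrightarrow> q \<le> 1 \<Longrightarrow> 0 \<le> east_Var q n f"
  unfolding east_Var_eq_cvar by (rule cvar_nonneg)

lemma east_Dir_nonneg: "0 \<le> q \<Longrightarrow> q \<le> 1 \<Longrightarrow> 0 \<le> east_Dir q n f"
  unfolding east_Dir_eq_cexp by (intro sum_nonneg cexp_nonneg site_dir_nonneg)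

lemma east_Var_nonzero_ex:
  assumes "0 < q" "q < 1" "1 \<le> n"
  shows "\<exists>f. east_Var q n f \<noteq> 0"
proof
  define f :: "(nat \<Rightarrow> bool) \<Rightarrow> real" where "f \<sigma> = (if \<sigma> 1 then 1 else 0)" for \<sigma>
  have sites: "[1..<Suc n] = 1 # [2..<Suc n]"
    using assms(3) by (simp add: upt_conv_Cons numeral_2_eq_2)
  have indep: "indep_of (set [2..<Suc n]) f"
    unfolding indep_of_def f_def by auto
  have "east_Var q n f = (1 - q) - (1 - q)\<^sup>2"
    unfolding east_Var_eq_cvar cvar_def sites
    using cexp_indep[OF indep] cexp_indep[OF indep_of_comp[OF indep, of "\<lambda>x. x\<^sup>2"]]
    by (simp add: site_avg_def f_def)
  also have "\<dots> \<noteq> 0" using assms by (simp add: power2_eq_square algebra_simps)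
  finally show "east_Var q n f \<noteq> 0" .
qed

lemma east_gap_ge:
  assumes "0 < q" "q < 1" "1 \<le> n"
    and "\<And>f. east_Var q n f \<noteq> 0 \<Longrightarrow> c * east_Var q n f \<le> east_Dir q n f"
  shows "c \<le> east_gap q n"
  unfolding east_gap_def
proof (rule cINF_greatest)
  show "{f. east_Var q n f \<noteq> 0} \<noteq> {}"
    using east_Var_nonzero_ex[OF assms(1-3)] by auto
next
  fix f assume "f \<in> {f. east_Var q n f \<noteq> 0}"
  then have "0 < east_Var q n f" "c * east_Var q n f \<le> east_Dir q n f"
    using assms east_Var_nonneg[of q n f] by (auto simp: less_le)
  then show "c \<le> east_Dir q n f / east_Var q n f"
    by (simp add: pos_le_divide_eq)
qed

lemma east_gap_nonneg: "0 < q \<Longrightarrow> q < 1 \<Longrightarrow> 1 \<le> n \<Longrightarrow> 0 \<le> east_gap q n"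
  by (rule east_gap_ge) (auto intro: east_Dir_nonneg)

lemma east_Var_le_Dir_div_gap:
  assumes "0 < q" "q < 1" "0 < east_gap q n"
  shows "east_Var q n f \<le> east_Dir q n f / east_gap q n"
proof (cases "east_Var q n f = 0")
  case True
  then show ?thesis using assms east_Dir_nonneg[of q n f] by simp
next
  case False
  have bdd: "bdd_below ((\<lambda>f. east_Dir q n f / east_Var q n f) ` {f. east_Var q n f \<noteq> 0})"
    using assms by (intro bdd_belowI2[of _ 0]) (auto intro!: divide_nonneg_nonneg east_Dir_nonneg east_Var_nonneg)
  have "east_gap q n \<le> east_Dir q n f / east_Var q n f"
    unfolding east_gap_def using False by (intro cINF_lower[OF bdd]) simp
  moreover have "0 < east_Var q n f"
    using False east_Var_nonneg[of q n f] assms(1,2) by simp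
  ultimately show ?thesis
    using assms(3) by (simp add: le_divide_eq pos_le_divide_eq mult.commute)
qed

section \<open>Poincare inequality on a block\<close>

lemma upt_append: "i \<le> j \<Longrightarrow> j \<le> k \<Longrightarrow> [i..<j] @ [j..<k] = [i..<k]"
  using upt_add_eq_append[of i j "k - j"] by simp

definition shift_into :: "nat \<Rightarrow> nat \<Rightarrow> (nat \<Rightarrow> bool) \<Rightarrow> (nat \<Rightarrow> bool) \<Rightarrow> nat \<Rightarrow> bool" where
  "shift_into a m \<sigma> \<tau> y = (if a < y \<and> y \<le> a + m then \<tau> (y - a) else \<sigma> y)"

lemma shift_into_upd:
  "x \<in> {1..m} \<Longrightarrow> shift_into a m \<sigma> (\<tau>(x := b)) = (shift_into a m \<sigma> \<tau>)(x + a := b)"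
  unfolding shift_into_def by (intro ext) auto

lemma shift_into_upd_outside:
  "m < x \<Longrightarrow> shift_into a m \<sigma> (\<tau>(x := b)) = shift_into a m \<sigma> \<tau>"
  unfolding shift_into_def by (intro ext) auto

lemma cexp_shift_into:
  "cexp q [1..<Suc m] (\<lambda>\<tau>. h (shift_into a m \<sigma> \<tau>)) \<tau> = cexp q [Suc a..<Suc (a + m)] h \<sigma>"
proof -
  have block: "map (\<lambda>x. x + a) [1..<Suc m] = [Suc a..<Suc (a + m)]"
    by (induction m) auto
  have "cexp q [1..<Suc m] (\<lambda>\<tau>. h (shift_into a m \<sigma> \<tau>)) \<tau>
      = cexp q (map (\<lambda>x. x + a) [1..<Suc m]) h (shift_into a m \<sigma> \<tau>)"
    by (rule cexp_transport, rule shift_into_upd) auto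
  also have "\<dots> = cexp q [Suc a..<Suc (a + m)] h (shift_into a m \<sigma> \<tau>)"
    unfolding block ..
  also have "\<dots> = cexp q [Suc a..<Suc (a + m)] h \<sigma>"
    by (rule indep_of_agree[OF indep_of_cexp_own]) (auto simp: shift_into_def)
  finally show ?thesis .
qed

lemma indep_of_shift_into: "indep_of {Suc m..} (\<lambda>\<tau>. g (shift_into a m \<sigma> \<tau>))"
  unfolding indep_of_def by (simp add: shift_into_upd_outside)

lemma east_Var_shift_into:
  assumes "m \<le> n"
  shows "east_Var q n (\<lambda>\<tau>. g (shift_into a m \<sigma> \<tau>)) = cvar q [Suc a..<Suc (a + m)] g \<sigma>"
proof -
  have sites: "[1..<Suc n] = [1..<Suc m] @ [Suc m..<Suc n]"
    using assms by (intro upt_append[symmetric]) auto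
  have "indep_of (set [Suc m..<Suc n]) (\<lambda>\<tau>. F (g (shift_into a m \<sigma> \<tau>)))" for F :: "real \<Rightarrow> real"
    by (rule indep_of_mono[OF indep_of_comp[OF indep_of_shift_into]]) auto
  from this[of "\<lambda>x. x"] this[of "\<lambda>x. x\<^sup>2"]
  have "east_Var q n (\<lambda>\<tau>. g (shift_into a m \<sigma> \<tau>))
      = cexp q [1..<Suc m] (\<lambda>\<tau>. (g (shift_into a m \<sigma> \<tau>))\<^sup>2) (\<lambda>_. undefined)
        - (cexp q [1..<Suc m] (\<lambda>\<tau>. g (shift_into a m \<sigma> \<tau>)) (\<lambda>_. undefined))\<^sup>2"
    unfolding east_Var_eq_cvar cvar_def sites by (simp only: cexp_append_indep)
  then show ?thesis
    unfolding cvar_def cexp_shift_into[of q m "\<lambda>x. (g x)\<^sup>2"] cexp_shift_into[of q m g] .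
qed

text \<open>The boundary condition \<open>\<not> \<sigma> a\<close> makes site \<open>a + 1\<close> unconstrained, as site \<open>1\<close> is.\<close>

lemma site_dir_shift_into:
  assumes "x \<in> {1..m}" and boundary: "a = 0 \<or> \<not> \<sigma> a"
  shows "site_dir q (\<lambda>\<tau>. g (shift_into a m \<sigma> \<tau>)) x
    = (\<lambda>\<tau>. site_dir q g (x + a) (shift_into a m \<sigma> \<tau>))"
proof
  fix \<tau>
  have "east_c x \<tau> = east_c (x + a) (shift_into a m \<sigma> \<tau>)"
    using assms unfolding east_c_def shift_into_def by auto
  moreover have "cvar q [x] (\<lambda>\<tau>. g (shift_into a m \<sigma> \<tau>)) \<tau> = cvar q [x + a] g (shift_into a m \<sigma> \<tau>)"
    using shift_into_upd[OF assms(1)] by (simp add: cvar_def site_avg_def)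
  ultimately show "site_dir q (\<lambda>\<tau>. g (shift_into a m \<sigma> \<tau>)) x \<tau> = site_dir q g (x + a) (shift_into a m \<sigma> \<tau>)"
    unfolding site_dir_def by simp
qed

lemma east_Dir_shift_into:
  assumes "m \<le> n" and boundary: "a = 0 \<or> \<not> \<sigma> a"
  shows "east_Dir q n (\<lambda>\<tau>. g (shift_into a m \<sigma> \<tau>))
    = (\<Sum>y\<in>{Suc a..a + m}. cexp q [Suc a..<Suc (a + m)] (site_dir q g y) \<sigma>)"
proof -
  let ?G = "\<lambda>\<tau>. g (shift_into a m \<sigma> \<tau>)"
  have sites: "[1..<Suc n] = [1..<Suc m] @ [Suc m..<Suc n]"
    using assms by (intro upt_append[symmetric]) auto
  have free: "indep_of {Suc m..} ?G" by (rule indep_of_shift_into)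
  have term_in: "cexp q [1..<Suc n] (site_dir q ?G x) (\<lambda>_. undefined)
      = cexp q [Suc a..<Suc (a + m)] (site_dir q g (x + a)) \<sigma>" if "x \<in> {1..m}" for x
  proof -
    have "indep_of {Suc m..} (site_dir q ?G x)"
      using that indep_of_cvar[OF free] unfolding site_dir_def indep_of_def east_c_def by auto
    then have "indep_of (set [Suc m..<Suc n]) (site_dir q ?G x)"
      by (rule indep_of_mono) auto
    then have "cexp q [1..<Suc n] (site_dir q ?G x) (\<lambda>_. undefined)
        = cexp q [1..<Suc m] (site_dir q ?G x) (\<lambda>_. undefined)"
      unfolding sites by (simp only: cexp_append_indep)
    also have "\<dots> = cexp q [1..<Suc m] (\<lambda>\<tau>. site_dir q g (x + a) (shift_into a m \<sigma> \<tau>)) (\<lambda>_. undefined)"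
      unfolding site_dir_shift_into[of x m a \<sigma> q g, OF that boundary] ..
    finally show ?thesis unfolding cexp_shift_into .
  qed
  have term_out: "site_dir q ?G x = (\<lambda>_. 0)" if "m < x" for x
    using that cvar_indep[OF indep_of_mono[OF free], of "[x]"] by (intro ext) (simp add: site_dir_def)
  have "east_Dir q n ?G = (\<Sum>x\<in>{1..m}. cexp q [1..<Suc n] (site_dir q ?G x) (\<lambda>_. undefined))"
    unfolding east_Dir_eq_cexp
    using assms(1) term_out cexp_const[of q _ 0] by (intro sum.mono_neutral_right) auto
  also have "\<dots> = (\<Sum>x\<in>{1..m}. cexp q [Suc a..<Suc (a + m)] (site_dir q g (x + a)) \<sigma>)"
    by (intro sum.cong refl term_in)
  also have "\<dots> = (\<Sum>y\<in>{Suc a..a + m}. cexp q [Suc a..<Suc (a + m)] (site_dir q g y) \<sigma>)"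
    using sum.shift_bounds_cl_nat_ivl[of "\<lambda>y. cexp q [Suc a..<Suc (a + m)] (site_dir q g y) \<sigma>" 1 a m]
    by (simp add: add.commute)
  finally show ?thesis .
qed

lemma local_poincare:
  assumes "0 < q" "q < 1" "0 < east_gap q n" "m \<le> n" and boundary: "a = 0 \<or> \<not> \<sigma> a"
  shows "cvar q [Suc a..<Suc (a + m)] g \<sigma>
    \<le> (\<Sum>y\<in>{Suc a..a + m}. cexp q [Suc a..<Suc (a + m)] (site_dir q g y) \<sigma>) / east_gap q n"
  using east_Var_le_Dir_div_gap[OF assms(1-3), of "\<lambda>\<tau>. g (shift_into a m \<sigma> \<tau>)"]
  unfolding east_Var_shift_into[OF assms(4)] east_Dir_shift_into[of m n a \<sigma> q g, OF assms(4) boundary] .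

section \<open>Variance bound for two blocks\<close>

lemma cexp_indicator_Cauchy_Schwarz:
  assumes "0 \<le> q" "q \<le> 1" and indicator: "\<And>\<tau>. \<iota> \<tau> = 0 \<or> \<iota> \<tau> = 1"
  shows "(cexp q xs (\<lambda>\<tau>. \<iota> \<tau> * G \<tau>) \<sigma>)\<^sup>2 \<le> cexp q xs \<iota> \<sigma> * cexp q xs (\<lambda>\<tau>. \<iota> \<tau> * (G \<tau>)\<^sup>2) \<sigma>"
proof -
  have "(\<iota> \<tau>)\<^sup>2 = \<iota> \<tau>" "(\<iota> \<tau> * G \<tau>)\<^sup>2 = \<iota> \<tau> * (G \<tau>)\<^sup>2" for \<tau>
    using indicator[of \<tau>] by (auto simp: power_mult_distrib)
  with cexp_Cauchy_Schwarz[OF assms(1,2), of xs \<iota> "\<lambda>\<tau>. \<iota> \<tau> * G \<tau>" \<sigma>] show ?thesis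
    by (simp add: mult.assoc[symmetric] power2_eq_square[symmetric])
qed

lemma square_le_of_split:
  fixes s M X u Y Z1 Z2 :: real
  assumes s: "0 < s" "s < 1" and split: "(1 - s\<^sup>2) * M = X + u"
    and X: "X\<^sup>2 \<le> (1 - s\<^sup>2) * Y" and u1: "u\<^sup>2 \<le> s\<^sup>2 * Z1" and u2: "u\<^sup>2 \<le> (1 - s\<^sup>2) * Z2"
  shows "M\<^sup>2 \<le> (Y + s * (Z1 + Z2)) / (1 - s)"
proof -
  define e where "e = 1 - s\<^sup>2"
  have e: "e = (1 - s) * (1 + s)" unfolding e_def by (simp add: power2_eq_square algebra_simps)
  then have e0: "0 < e" using s by simp
  have u: "u\<^sup>2 \<le> s\<^sup>2 * e * (Z1 + Z2)"
  proof -
    have "e * u\<^sup>2 + s\<^sup>2 * u\<^sup>2 \<le> e * (s\<^sup>2 * Z1) + s\<^sup>2 * (e * Z2)"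
      using u1 u2 e0 unfolding e_def by (intro add_mono mult_left_mono) auto
    then show ?thesis unfolding e_def by (simp add: algebra_simps)
  qed
  have young: "(X + u)\<^sup>2 \<le> (1 + s) * X\<^sup>2 + (1 + 1 / s) * u\<^sup>2"
  proof -
    have "(1 + s) * X\<^sup>2 + (1 + 1 / s) * u\<^sup>2 - (X + u)\<^sup>2 = (s * X - u)\<^sup>2 / s"
      using s by (simp add: field_simps power2_eq_square)
    moreover have "0 \<le> (s * X - u)\<^sup>2 / s" using s by simp
    ultimately show ?thesis by linarith
  qed
  have "e * (e * M\<^sup>2) = (e * M)\<^sup>2" by (simp add: power2_eq_square)
  also have "\<dots> = (X + u)\<^sup>2" using split unfolding e_def by simp
  also have "\<dots> \<le> (1 + s) * X\<^sup>2 + (1 + 1 / s) * u\<^sup>2" by (rule young)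
  also have "\<dots> \<le> (1 + s) * (e * Y) + (1 + 1 / s) * (s\<^sup>2 * e * (Z1 + Z2))"
    using X u s unfolding e_def by (intro add_mono mult_left_mono) auto
  also have "\<dots> = e * ((1 + s) * (Y + s * (Z1 + Z2)))"
    using s by (simp add: field_simps power2_eq_square)
  finally have "e * (e * M\<^sup>2) \<le> e * ((1 + s) * (Y + s * (Z1 + Z2)))" .
  then have "e * M\<^sup>2 \<le> (1 + s) * (Y + s * (Z1 + Z2))"
    using e0 by simp
  then have "(1 + s) * ((1 - s) * M\<^sup>2) \<le> (1 + s) * (Y + s * (Z1 + Z2))"
    unfolding e by (simp add: ac_simps)
  then have "(1 - s) * M\<^sup>2 \<le> Y + s * (Z1 + Z2)"
    using s by simp
  then show ?thesis
    using s by (simp add: pos_le_divide_eq mult.commute)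
qed

text \<open>With \<open>M = cexp q A F\<close>, split \<open>F = \<chi> F + (1 - \<chi>) (F - M) + (1 - \<chi>) M\<close>: the last part averages
  to \<open>\<epsilon> M\<close>, and Cauchy-Schwarz bounds the first two, the middle one in two ways since
  \<open>F - M\<close> averages to zero.\<close>

lemma cexp_sq_le_split_by_indicator:
  assumes q: "0 \<le> q" "q \<le> 1" and "0 < \<epsilon>" "\<epsilon> < 1"
    and indicator: "\<And>\<tau>. \<chi> \<tau> = 0 \<or> \<chi> \<tau> = 1"
    and eps: "\<And>\<tau>. cexp q A (\<lambda>\<tau>. 1 - \<chi> \<tau>) \<tau> = \<epsilon>"
  shows "(cexp q A F \<sigma>)\<^sup>2 \<le> (cexp q A (\<lambda>\<tau>. \<chi> \<tau> * (F \<tau>)\<^sup>2) \<sigma>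
      + sqrt \<epsilon> * cexp q A (\<lambda>\<tau>. (F \<tau> - cexp q A F \<tau>)\<^sup>2) \<sigma>) / (1 - sqrt \<epsilon>)"
proof -
  define M where "M = cexp q A F"
  define s where "s = sqrt \<epsilon>"
  have s: "0 < s" "s < 1" "s\<^sup>2 = \<epsilon>" unfolding s_def using assms(3,4) by auto
  have indicator': "\<And>\<tau>. 1 - \<chi> \<tau> = 0 \<or> 1 - \<chi> \<tau> = 1" using indicator by force
  have M_own: "indep_of (set A) M" unfolding M_def by (rule indep_of_cexp_own)
  have chi: "cexp q A \<chi> \<tau> = 1 - \<epsilon>" for \<tau>
    using eps[of \<tau>] cexp_diff[of q A "\<lambda>_. 1" \<chi> \<tau>] cexp_const[of q A 1 \<tau>] by simp
  define X where "X = cexp q A (\<lambda>\<tau>. \<chi> \<tau> * F \<tau>) \<sigma>"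
  define u where "u = cexp q A (\<lambda>\<tau>. (1 - \<chi> \<tau>) * (F \<tau> - M \<tau>)) \<sigma>"
  have "M \<sigma> = cexp q A (\<lambda>\<tau>. \<chi> \<tau> * F \<tau> + ((1 - \<chi> \<tau>) * (F \<tau> - M \<tau>) + (1 - \<chi> \<tau>) * M \<tau>)) \<sigma>"
    unfolding M_def by (simp add: algebra_simps)
  also have "\<dots> = X + u + \<epsilon> * M \<sigma>"
    unfolding X_def u_def cexp_add cexp_mult_indep_right[OF M_own] eps by simp
  finally have split: "(1 - s\<^sup>2) * M \<sigma> = X + u"
    using s(3) by (simp add: algebra_simps)
  have centered: "cexp q A (\<lambda>\<tau>. \<chi> \<tau> * (F \<tau> - M \<tau>)) \<sigma> = - u"
  proof -
    have "cexp q A (\<lambda>\<tau>. F \<tau> - M \<tau>) \<sigma> = 0"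
      unfolding cexp_diff cexp_indep[OF M_own] by (simp add: M_def)
    then show ?thesis
      using cexp_add[of q A "\<lambda>\<tau>. \<chi> \<tau> * (F \<tau> - M \<tau>)" "\<lambda>\<tau>. (1 - \<chi> \<tau>) * (F \<tau> - M \<tau>)" \<sigma>]
      unfolding u_def by (simp add: algebra_simps)
  qed
  have X: "X\<^sup>2 \<le> (1 - s\<^sup>2) * cexp q A (\<lambda>\<tau>. \<chi> \<tau> * (F \<tau>)\<^sup>2) \<sigma>"
    using cexp_indicator_Cauchy_Schwarz[where \<iota> = \<chi> and xs = A and G = F and \<sigma> = \<sigma>, OF q indicator] unfolding X_def chi s(3) .
  have u1: "u\<^sup>2 \<le> s\<^sup>2 * cexp q A (\<lambda>\<tau>. (1 - \<chi> \<tau>) * (F \<tau> - M \<tau>)\<^sup>2) \<sigma>"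
    using cexp_indicator_Cauchy_Schwarz[where \<iota> = "\<lambda>\<tau>. 1 - \<chi> \<tau>" and xs = A and G = "\<lambda>\<tau>. F \<tau> - M \<tau>" and \<sigma> = \<sigma>, OF q indicator']
    unfolding u_def eps s(3) .
  have u2: "u\<^sup>2 \<le> (1 - s\<^sup>2) * cexp q A (\<lambda>\<tau>. \<chi> \<tau> * (F \<tau> - M \<tau>)\<^sup>2) \<sigma>"
    using cexp_indicator_Cauchy_Schwarz[where \<iota> = \<chi> and xs = A and G = "\<lambda>\<tau>. F \<tau> - M \<tau>" and \<sigma> = \<sigma>, OF q indicator]
    unfolding centered chi s(3) by simp
  have "cexp q A (\<lambda>\<tau>. (1 - \<chi> \<tau>) * (F \<tau> - M \<tau>)\<^sup>2) \<sigma> + cexp q A (\<lambda>\<tau>. \<chi> \<tau> * (F \<tau> - M \<tau>)\<^sup>2) \<sigma>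
      = cexp q A (\<lambda>\<tau>. (F \<tau> - M \<tau>)\<^sup>2) \<sigma>"
    unfolding cexp_add[symmetric] by (simp add: algebra_simps)
  with square_le_of_split[OF s(1,2) split X u1 u2] show ?thesis
    unfolding M_def s_def by simp
qed

lemma cexp_sq_double_dev_le:
  assumes q: "0 \<le> q" "q \<le> 1"
  shows "cexp q (A @ B) (\<lambda>\<tau>. (f \<tau> - cexp q A f \<tau> - cexp q B f \<tau> + cexp q (A @ B) f \<tau>)\<^sup>2) \<sigma>
    \<le> cexp q (A @ B) (cvar q A f) \<sigma>"
proof -
  define k where "k \<tau> = f \<tau> - cexp q A f \<tau>" for \<tau>
  have Bk: "cexp q B k \<tau> = cexp q B f \<tau> - cexp q (A @ B) f \<tau>" for \<tau>
    unfolding k_def cexp_diff cexp_append cexp_commute[of q B A] ..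
  have "cexp q (A @ B) (\<lambda>\<tau>. (f \<tau> - cexp q A f \<tau> - cexp q B f \<tau> + cexp q (A @ B) f \<tau>)\<^sup>2) \<sigma>
      = cexp q (A @ B) (\<lambda>\<tau>. (k \<tau> - cexp q B k \<tau>)\<^sup>2) \<sigma>"
    by (simp add: Bk) (simp add: k_def algebra_simps)
  also have "\<dots> \<le> cexp q (A @ B) (\<lambda>\<tau>. (k \<tau>)\<^sup>2) \<sigma>"
    using cexp_sq_dev_le[OF q, of B "A @ B" k] by simp
  also have "\<dots> = cexp q (A @ B) (cexp q A (\<lambda>\<tau>. (k \<tau>)\<^sup>2)) \<sigma>"
    by (simp add: cexp_absorb)
  also have "cexp q A (\<lambda>\<tau>. (k \<tau>)\<^sup>2) = cvar q A f"
    unfolding k_def by (rule ext) (rule cexp_sq_dev)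
  finally show ?thesis .
qed

lemma cvar_two_blocks:
  assumes q: "0 \<le> q" "q \<le> 1" and "0 < \<epsilon>" "\<epsilon> < 1"
    and indicator: "\<And>\<tau>. \<chi> \<tau> = 0 \<or> \<chi> \<tau> = 1" and indep: "indep_of (set B) \<chi>"
    and eps: "\<And>\<tau>. cexp q A (\<lambda>\<tau>. 1 - \<chi> \<tau>) \<tau> = \<epsilon>"
  shows "cvar q (A @ B) f \<sigma> \<le>
    (cexp q (A @ B) (cvar q A f) \<sigma> + cexp q (A @ B) (\<lambda>\<tau>. \<chi> \<tau> * cvar q B f \<tau>) \<sigma>) / (1 - sqrt \<epsilon>)"
proof -
  define E where "E = cexp q (A @ B)"
  define s where "s = sqrt \<epsilon>"
  define F where "F \<tau> = f \<tau> - cexp q B f \<tau>" for \<tau>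
  have s: "0 < s" "s < 1" unfolding s_def using assms(3,4) by auto
  have absorbA: "E (cexp q A g) = E g" and absorbB: "E (cexp q B g) = E g" for g
    unfolding E_def by (simp_all add: cexp_absorb)
  have AF: "cexp q A F \<tau> = cexp q A f \<tau> - E f \<tau>" for \<tau>
    unfolding F_def E_def cexp_diff cexp_append ..
  then have total: "cvar q (A @ B) f \<sigma> = E (cvar q A f) \<sigma> + E (\<lambda>\<tau>. (cexp q A F \<tau>)\<^sup>2) \<sigma>"
    using cvar_total_variance[of A "A @ B" q f \<sigma>] unfolding E_def by simp
  have "E (\<lambda>\<tau>. (cexp q A F \<tau>)\<^sup>2) \<sigma> \<le> E (\<lambda>\<tau>. (cexp q A (\<lambda>\<tau>. \<chi> \<tau> * (F \<tau>)\<^sup>2) \<tau>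
      + s * cexp q A (\<lambda>\<tau>. (F \<tau> - cexp q A F \<tau>)\<^sup>2) \<tau>) / (1 - s)) \<sigma>"
    unfolding E_def s_def
    by (rule cexp_mono[OF q cexp_sq_le_split_by_indicator[OF q assms(3,4) indicator eps]])
  also have "\<dots> = (E (\<lambda>\<tau>. \<chi> \<tau> * (F \<tau>)\<^sup>2) \<sigma> + s * E (\<lambda>\<tau>. (F \<tau> - cexp q A F \<tau>)\<^sup>2) \<sigma>) / (1 - s)"
    unfolding E_def cexp_divide cexp_add cexp_cmult by (simp only: absorbA[unfolded E_def])
  also have "E (\<lambda>\<tau>. \<chi> \<tau> * (F \<tau>)\<^sup>2) = E (\<lambda>\<tau>. \<chi> \<tau> * cvar q B f \<tau>)"
  proof -
    have "cexp q B (\<lambda>\<tau>. \<chi> \<tau> * (F \<tau>)\<^sup>2) = (\<lambda>\<tau>. \<chi> \<tau> * cvar q B f \<tau>)"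
      unfolding F_def cexp_mult_indep[OF indep] cexp_sq_dev ..
    then show ?thesis using absorbB by metis
  qed
  also have "E (\<lambda>\<tau>. (F \<tau> - cexp q A F \<tau>)\<^sup>2) \<sigma> \<le> E (cvar q A f) \<sigma>"
    using cexp_sq_double_dev_le[OF q, of A B f \<sigma>] unfolding E_def AF[unfolded E_def] F_def
    by (simp add: algebra_simps)
  finally have "cvar q (A @ B) f \<sigma> \<le> E (cvar q A f) \<sigma>
      + (E (\<lambda>\<tau>. \<chi> \<tau> * cvar q B f \<tau>) \<sigma> + s * E (cvar q A f) \<sigma>) / (1 - s)"
    using total s by (simp add: divide_right_mono)
  also have "\<dots> = (E (cvar q A f) \<sigma> + E (\<lambda>\<tau>. \<chi> \<tau> * cvar q B f \<tau>) \<sigma>) / (1 - s)"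
    using s by (simp add: field_simps)
  finally show ?thesis unfolding E_def s_def .
qed

section \<open>Two overlapping East blocks\<close>

lemma cexp_indicator_all_occupied:
  assumes "distinct xs" "finite S"
  shows "cexp q xs (\<lambda>\<sigma>. if \<forall>x\<in>S. \<sigma> x then 1 else 0) \<sigma>
    = (1 - q) ^ card (S \<inter> set xs) * (if \<forall>x\<in>S - set xs. \<sigma> x then 1 else 0)"
  using assms(1)
proof (induction xs arbitrary: \<sigma>)
  case (Cons x xs)
  define c where "c = card (S \<inter> set xs)"
  define ind where "ind \<tau> = (if \<forall>y\<in>S - set xs. \<tau> y then 1 else (0::real))" for \<tau>
  have x: "x \<notin> set xs" using Cons.prems by simp
  have IH: "cexp q xs (\<lambda>\<sigma>. if \<forall>x\<in>S. \<sigma> x then 1 else 0) \<tau> = (1 - q) ^ c * ind \<tau>" for \<tau>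
    using Cons unfolding c_def ind_def by simp
  have "cexp q (x # xs) (\<lambda>\<sigma>. if \<forall>x\<in>S. \<sigma> x then 1 else 0) \<sigma>
      = (1 - q) * ((1 - q) ^ c * ind (\<sigma>(x := True))) + q * ((1 - q) ^ c * ind (\<sigma>(x := False)))"
    by (simp add: site_avg_def IH)
  also have "\<dots> = (1 - q) ^ card (S \<inter> set (x # xs)) * (if \<forall>y\<in>S - set (x # xs). \<sigma> y then 1 else 0)"
  proof (cases "x \<in> S")
    case True
    then have "S \<inter> set (x # xs) = insert x (S \<inter> set xs)" by auto
    then have "card (S \<inter> set (x # xs)) = Suc c"
      unfolding c_def using x assms(2) by simp
    moreover have "ind (\<sigma>(x := False)) = 0" unfolding ind_def using True x by auto
    moreover have "ind (\<sigma>(x := True)) = (if \<forall>y\<in>S - set (x # xs). \<sigma> y then 1 else 0)"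
      unfolding ind_def using x by auto
    ultimately show ?thesis by simp
  next
    case False
    then have "S \<inter> set (x # xs) = S \<inter> set xs" "S - set (x # xs) = S - set xs"
      "ind (\<sigma>(x := b)) = ind \<sigma>" for b
      unfolding ind_def by auto
    then show ?thesis unfolding c_def ind_def by (simp add: algebra_simps)
  qed
  finally show ?case .
qed simp

definition first_zero :: "nat \<Rightarrow> nat \<Rightarrow> (nat \<Rightarrow> bool) \<Rightarrow> real" where
  "first_zero a x \<sigma> = (if \<not> \<sigma> x \<and> (\<forall>z. a \<le> z \<and> z < x \<longrightarrow> \<sigma> z) then 1 else 0)"

lemma first_zero_nonneg: "0 \<le> first_zero a x \<sigma>"
  by (simp add: first_zero_def)

lemma indep_of_first_zero: "indep_of {Suc x..} (first_zero a x)"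
  unfolding indep_of_def first_zero_def by auto

lemma sum_first_zero:
  "(\<Sum>x\<in>{a..b}. first_zero a x \<sigma>) = (if \<exists>x\<in>{a..b}. \<not> \<sigma> x then 1 else 0)"
proof (cases "\<exists>x\<in>{a..b}. \<not> \<sigma> x")
  case True
  define x0 where "x0 = Min {x\<in>{a..b}. \<not> \<sigma> x}"
  have zeros: "finite {x\<in>{a..b}. \<not> \<sigma> x}" "{x\<in>{a..b}. \<not> \<sigma> x} \<noteq> {}"
    using True by auto
  have x0: "x0 \<in> {a..b}" "\<not> \<sigma> x0" "\<And>z. z \<in> {a..b} \<Longrightarrow> \<not> \<sigma> z \<Longrightarrow> x0 \<le> z"
    using Min_in[OF zeros] Min_le[OF zeros(1)] unfolding x0_def by auto
  have "first_zero a x \<sigma> = (if x = x0 then 1 else 0)" if "x \<in> {a..b}" for x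
  proof (cases "x = x0")
    case True
    have "\<sigma> z" if "a \<le> z" "z < x0" for z
    proof (rule ccontr)
      assume "\<not> \<sigma> z"
      with that x0(1) have "x0 \<le> z" by (intro x0(3)) auto
      with that show False by simp
    qed
    with True x0(2) show ?thesis by (simp add: first_zero_def)
  next
    case False
    show ?thesis
    proof (cases "\<sigma> x")
      case False
      with \<open>x \<noteq> x0\<close> x0(3)[OF that] have "x0 < x" by simp
      with x0(1,2) show ?thesis by (auto simp: first_zero_def)
    qed (use False in \<open>simp add: first_zero_def\<close>)
  qed
  then have "(\<Sum>x\<in>{a..b}. first_zero a x \<sigma>) = (\<Sum>x\<in>{a..b}. if x = x0 then 1 else 0)"
    by (intro sum.cong) auto
  with True x0(1) show ?thesis by simp
next
  case False
  then show ?thesis by (simp add: first_zero_def)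
qed

lemma cexp_cvar_initial_block_le:
  assumes q: "0 < q" "q < 1" and gap: "0 < east_gap q l" and "l \<le> L"
  shows "cexp q [1..<Suc L] (cvar q [1..<Suc l] f) (\<lambda>_. undefined) \<le> east_Dir q L f / east_gap q l"
proof -
  let ?E = "\<lambda>g. cexp q [1..<Suc L] g (\<lambda>_. undefined)"
  have q': "0 \<le> q" "q \<le> 1" using q by auto
  have "cvar q [1..<Suc l] f \<sigma> \<le> (\<Sum>y\<in>{1..l}. cexp q [1..<Suc l] (site_dir q f y) \<sigma>) / east_gap q l" for \<sigma>
    using local_poincare[OF q gap order_refl, of 0 \<sigma> f] by simp
  then have "?E (cvar q [1..<Suc l] f) \<le> ?E (\<lambda>\<sigma>. (\<Sum>y\<in>{1..l}. cexp q [1..<Suc l] (site_dir q f y) \<sigma>) / east_gap q l)"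
    by (rule cexp_mono[OF q'])
  also have "\<dots> = (\<Sum>y\<in>{1..l}. ?E (site_dir q f y)) / east_gap q l"
    using \<open>l \<le> L\<close> by (simp del: upt_Suc add: cexp_divide cexp_sum cexp_absorb)
  also have "\<dots> \<le> (\<Sum>y\<in>{1..L}. ?E (site_dir q f y)) / east_gap q l"
    using gap \<open>l \<le> L\<close> by (intro divide_right_mono sum_mono2) (auto intro!: cexp_nonneg site_dir_nonneg q')
  finally show ?thesis unfolding east_Dir_eq_cexp .
qed

text \<open>On \<open>first_zero a x\<close> site \<open>x + 1\<close> is unconstrained, so the relaxation of the block \<open>{x + 1..L}\<close>
  of length at most \<open>l\<close> is controlled by the gap of length \<open>l\<close>.\<close>

lemma cexp_first_zero_cvar_le:
  assumes q: "0 < q" "q < 1" and gap: "0 < east_gap q l" and "x \<le> l" "l \<le> L" "L \<le> x + l"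
  shows "cexp q [1..<Suc L] (\<lambda>\<sigma>. first_zero a x \<sigma> * cvar q [Suc l..<Suc L] f \<sigma>) (\<lambda>_. undefined)
    \<le> (\<Sum>y\<in>{1..L}. cexp q [1..<Suc L] (\<lambda>\<sigma>. first_zero a x \<sigma> * site_dir q f y \<sigma>) (\<lambda>_. undefined))
      / east_gap q l"
proof -
  let ?E = "\<lambda>g. cexp q [1..<Suc L] g (\<lambda>_. undefined)"
  let ?I = "first_zero a x"
  define C where "C = [Suc x..<Suc L]"
  define D where "D = [Suc x..<Suc l]"
  have q': "0 \<le> q" "q \<le> 1" using q by auto
  have CD: "C = D @ [Suc l..<Suc L]"
    unfolding C_def D_def using assms by (intro upt_append[symmetric]) auto
  have I_C: "indep_of (set C) ?I"
    unfolding C_def by (rule indep_of_mono[OF indep_of_first_zero]) (auto simp del: upt_Suc)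
  have I_D: "indep_of (set D) ?I"
    unfolding D_def by (rule indep_of_mono[OF indep_of_first_zero]) (auto simp del: upt_Suc)
  have sub: "set C \<subseteq> set [1..<Suc L]" "set D \<subseteq> set [1..<Suc L]"
    unfolding C_def D_def using assms by (auto simp del: upt_Suc)
  have block: "cexp q D (cvar q [Suc l..<Suc L] f) \<sigma> \<le> cvar q C f \<sigma>" for \<sigma>
    using cexp_cvar_le[OF q', of "[Suc l..<Suc L]" C f \<sigma>]
    unfolding CD cexp_append_indep[OF indep_of_cvar_own] by simp
  have poincare: "?I \<sigma> * cvar q C f \<sigma>
      \<le> (\<Sum>y\<in>{Suc x..L}. cexp q C (\<lambda>\<sigma>. ?I \<sigma> * site_dir q f y \<sigma>) \<sigma>) / east_gap q l" for \<sigma>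
  proof -
    have "?I \<sigma> * cvar q C f \<sigma> \<le> ?I \<sigma> * ((\<Sum>y\<in>{Suc x..L}. cexp q C (site_dir q f y) \<sigma>) / east_gap q l)"
    proof (cases "\<sigma> x")
      case False
      have "Suc (x + (L - x)) = Suc L" "x + (L - x) = L" using assms by auto
      with local_poincare[OF q gap, of "L - x" x \<sigma> f] False assms
      show ?thesis unfolding C_def by (intro mult_left_mono first_zero_nonneg) auto
    qed (simp add: first_zero_def)
    then show ?thesis by (simp add: cexp_mult_indep[OF I_C] sum_distrib_left)
  qed
  have "?E (\<lambda>\<sigma>. ?I \<sigma> * cvar q [Suc l..<Suc L] f \<sigma>) = ?E (cexp q D (\<lambda>\<sigma>. ?I \<sigma> * cvar q [Suc l..<Suc L] f \<sigma>))"
    using cexp_absorb[OF sub(2)] by simp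
  also have "\<dots> \<le> ?E (\<lambda>\<sigma>. ?I \<sigma> * cvar q C f \<sigma>)"
    unfolding cexp_mult_indep[OF I_D]
    by (intro cexp_mono[OF q'] mult_left_mono block first_zero_nonneg)
  also have "\<dots> \<le> ?E (\<lambda>\<sigma>. (\<Sum>y\<in>{Suc x..L}. cexp q C (\<lambda>\<sigma>. ?I \<sigma> * site_dir q f y \<sigma>) \<sigma>) / east_gap q l)"
    by (intro cexp_mono[OF q'] poincare)
  also have "\<dots> = (\<Sum>y\<in>{Suc x..L}. ?E (\<lambda>\<sigma>. ?I \<sigma> * site_dir q f y \<sigma>)) / east_gap q l"
    by (simp only: cexp_divide cexp_sum cexp_absorb[OF sub(1)])
  also have "\<dots> \<le> (\<Sum>y\<in>{1..L}. ?E (\<lambda>\<sigma>. ?I \<sigma> * site_dir q f y \<sigma>)) / east_gap q l"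
    using gap by (intro divide_right_mono sum_mono2)
      (auto intro!: cexp_nonneg mult_nonneg_nonneg first_zero_nonneg site_dir_nonneg q')
  finally show ?thesis .
qed

lemma cexp_some_zero_cvar_final_block_le:
  assumes q: "0 < q" "q < 1" and gap: "0 < east_gap q l" and "d \<le> l" "l \<le> L" "L \<le> 2 * l - d"
  shows "cexp q [1..<Suc L] (\<lambda>\<sigma>. (if \<exists>x\<in>{Suc (l - d)..l}. \<not> \<sigma> x then 1 else 0)
      * cvar q [Suc l..<Suc L] f \<sigma>) (\<lambda>_. undefined) \<le> east_Dir q L f / east_gap q l"
proof -
  let ?E = "\<lambda>g. cexp q [1..<Suc L] g (\<lambda>_. undefined)"
  let ?O = "{Suc (l - d)..l}"
  let ?I = "first_zero (Suc (l - d))"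
  have q': "0 \<le> q" "q \<le> 1" using q by auto
  have "?E (\<lambda>\<sigma>. (if \<exists>x\<in>?O. \<not> \<sigma> x then 1 else 0) * cvar q [Suc l..<Suc L] f \<sigma>)
      = (\<Sum>x\<in>?O. ?E (\<lambda>\<sigma>. ?I x \<sigma> * cvar q [Suc l..<Suc L] f \<sigma>))"
    by (simp flip: sum_first_zero add: sum_distrib_right cexp_sum)
  also have "\<dots> \<le> (\<Sum>x\<in>?O. (\<Sum>y\<in>{1..L}. ?E (\<lambda>\<sigma>. ?I x \<sigma> * site_dir q f y \<sigma>)) / east_gap q l)"
    using assms by (intro sum_mono cexp_first_zero_cvar_le[OF q gap]) auto
  also have "\<dots> = (\<Sum>y\<in>{1..L}. ?E (\<lambda>\<sigma>. (\<Sum>x\<in>?O. ?I x \<sigma>) * site_dir q f y \<sigma>)) / east_gap q l"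
    by (simp add: sum_divide_distrib[symmetric] sum_distrib_right cexp_sum sum.swap[of _ ?O])
  also have "\<dots> \<le> (\<Sum>y\<in>{1..L}. ?E (site_dir q f y)) / east_gap q l"
    using gap by (intro divide_right_mono sum_mono cexp_mono[OF q'])
      (auto simp: sum_first_zero intro!: mult_left_le_one_le site_dir_nonneg q')
  finally show ?thesis unfolding east_Dir_eq_cexp .
qed

lemma east_Var_overlap_le:
  assumes q: "0 < q" "q < 1" and "1 \<le> d" "d \<le> l" and gap: "0 < east_gap q l"
  shows "east_Var q (2 * l - d) f
    \<le> 2 * east_Dir q (2 * l - d) f / east_gap q l / (1 - sqrt ((1 - q) ^ d))"
proof -
  define L where "L = 2 * l - d"
  define \<epsilon> :: real where "\<epsilon> = (1 - q) ^ d"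
  define A where "A = [1..<Suc l]"
  define B where "B = [Suc l..<Suc L]"
  define \<chi> :: "(nat \<Rightarrow> bool) \<Rightarrow> real" where
    "\<chi> \<sigma> = (if \<exists>x\<in>{Suc (l - d)..l}. \<not> \<sigma> x then 1 else 0)" for \<sigma>
  have q': "0 \<le> q" "q \<le> 1" using q by auto
  have eps: "0 < \<epsilon>" "\<epsilon> < 1"
    unfolding \<epsilon>_def using q assms(3) by (auto intro: power_less_one_iff[THEN iffD2])
  have "l \<le> L" unfolding L_def using assms by simp
  then have sites: "[1..<Suc L] = A @ B"
    unfolding A_def B_def by (intro upt_append[symmetric]) auto
  have indep: "indep_of (set B) \<chi>"
    unfolding indep_of_def \<chi>_def B_def by (auto simp del: upt_Suc)
  have all_occupied: "cexp q A (\<lambda>\<sigma>. 1 - \<chi> \<sigma>) \<sigma> = \<epsilon>" for \<sigma>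
  proof -
    have indicator: "(\<lambda>\<sigma>. 1 - \<chi> \<sigma>) = (\<lambda>\<sigma>. if \<forall>x\<in>{Suc (l - d)..l}. \<sigma> x then 1 else 0)"
      unfolding \<chi>_def by auto
    have overlap: "{Suc (l - d)..l} \<inter> set A = {Suc (l - d)..l}" "{Suc (l - d)..l} - set A = {}"
      unfolding A_def by (auto simp del: upt_Suc)
    have card: "card {Suc (l - d)..l} = d" using assms(4) by simp
    have "cexp q A (\<lambda>\<sigma>. if \<forall>x\<in>{Suc (l - d)..l}. \<sigma> x then 1 else 0) \<sigma>
        = (1 - q) ^ card ({Suc (l - d)..l} \<inter> set A)
          * (if \<forall>x\<in>{Suc (l - d)..l} - set A. \<sigma> x then 1 else 0)"
      unfolding A_def by (rule cexp_indicator_all_occupied) auto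
    then show ?thesis unfolding \<epsilon>_def indicator overlap card by simp
  qed
  have "east_Var q L f \<le> (cexp q [1..<Suc L] (cvar q A f) (\<lambda>_. undefined)
      + cexp q [1..<Suc L] (\<lambda>\<sigma>. \<chi> \<sigma> * cvar q B f \<sigma>) (\<lambda>_. undefined)) / (1 - sqrt \<epsilon>)"
    unfolding east_Var_eq_cvar sites
    by (rule cvar_two_blocks[OF q' eps _ indep all_occupied]) (simp add: \<chi>_def)
  also have "\<dots> \<le> (east_Dir q L f / east_gap q l + east_Dir q L f / east_gap q l) / (1 - sqrt \<epsilon>)"
    using eps \<open>l \<le> L\<close> assms(4)
    unfolding A_def B_def \<chi>_def
    by (intro divide_right_mono add_mono cexp_cvar_initial_block_le[OF q gap]
        cexp_some_zero_cvar_final_block_le[OF q gap]) (auto simp: L_def)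
  finally show ?thesis unfolding L_def \<epsilon>_def by simp
qed

lemma east_gap_antimono:
  assumes q: "0 < q" "q < 1" and "1 \<le> l" "l \<le> L"
  shows "east_gap q L \<le> east_gap q l"
proof (cases "0 < east_gap q L")
  case True
  show ?thesis
  proof (rule east_gap_ge[OF q \<open>1 \<le> l\<close>])
    fix g
    have "east_Var q l g \<le> east_Dir q l g / east_gap q L"
      using local_poincare[OF q True \<open>l \<le> L\<close>, of 0 "\<lambda>_. undefined" g]
      unfolding east_Var_eq_cvar east_Dir_eq_cexp by simp
    then show "east_gap q L * east_Var q l g \<le> east_Dir q l g"
      using True by (simp add: pos_le_divide_eq mult.commute)
  qed
next
  case False
  then show ?thesis using east_gap_nonneg[OF q \<open>1 \<le> l\<close>] by simp
qed

text \<open>\<open>T_rel = 1 / east_gap\<close> is \<open>0\<close> when the gap vanishes; antitonicity of the gap takes care of that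
  degenerate case.\<close>

lemma T_rel_overlap_le:
  assumes q: "0 < q" "q < 1" and "1 \<le> d" "d \<le> l"
  shows "T_rel q (2 * l - d) \<le> 2 / (1 - sqrt ((1 - q) ^ d)) * T_rel q l"
proof -
  define L where "L = 2 * l - d"
  define s where "s = 1 - sqrt ((1 - q) ^ d)"
  have "(1 - q) ^ d < 1" using q assms(3) by (auto intro: power_less_one_iff[THEN iffD2])
  then have s: "0 < s" unfolding s_def by simp
  have l: "1 \<le> l" "l \<le> L" unfolding L_def using assms by auto
  show ?thesis
  proof (cases "0 < east_gap q l")
    case True
    have "s * east_gap q l / 2 \<le> east_gap q L"
    proof (rule east_gap_ge[OF q order_trans[OF l]])
      fix f
      show "s * east_gap q l / 2 * east_Var q L f \<le> east_Dir q L f"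
        using east_Var_overlap_le[OF q assms(3,4) True, of f] s True
        unfolding L_def[symmetric] s_def[symmetric]
        by (simp add: pos_le_divide_eq field_simps)
    qed
    moreover have "0 < s * east_gap q l / 2" using s True by simp
    ultimately have "1 / east_gap q L \<le> 1 / (s * east_gap q l / 2)"
      by (intro divide_left_mono) auto
    then show ?thesis unfolding T_rel_def L_def[symmetric] s_def[symmetric] by simp
  next
    case False
    then have "east_gap q l = 0" "east_gap q L = 0"
      using east_gap_nonneg[OF q l(1)] east_gap_antimono[OF q l] east_gap_nonneg[OF q order_trans[OF l]]
      by auto
    then show ?thesis unfolding T_rel_def L_def by simp
  qed
qed

lemma nat_ceiling_div_bounds:
  assumes "1 \<le> r" "1 \<le> l"
  shows "1 \<le> nat \<lceil>(1 / real r) * real l\<rceil>" "nat \<lceil>(1 / real r) * real l\<rceil> \<le> l"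
proof -
  have "0 < (1 / real r) * real l" using assms by simp
  then show "1 \<le> nat \<lceil>(1 / real r) * real l\<rceil>" by linarith
  have "(1 / real r) * real l \<le> real l"
    using assms by (simp add: divide_le_eq mult_le_cancel_left1)
  then show "nat \<lceil>(1 / real r) * real l\<rceil> \<le> l" by (simp add: ceiling_le_iff nat_le_iff)
qed

lemma ell_ge_3: "1 \<le> r \<Longrightarrow> 3 \<le> ell r n"
proof (induction r n rule: ell.induct)
  case (3 r n)
  have "ell r (Suc (Suc n)) = 2 * ell r (Suc n) - nat \<lceil>(1 / real r) * real (ell r (Suc n))\<rceil>"
    by (rule ell.simps(3))
  with 3 nat_ceiling_div_bounds(2)[of r "ell r (Suc n)"] show ?case by linarith
qed simp_all

theorem mainTheorem10:
  fixes q :: real and r i :: nat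
  assumes "0 < q" and "q < 1/2" and "r > 2" and "2 \<le> i" and "i \<le> r"
  shows "T_rel q (ell r i) \<le> 2 / (1 - sqrt (eps q r (i - 1))) * T_rel q (ell r (i - 1))"
proof -
  obtain j where i: "i = Suc (Suc j)" using \<open>2 \<le> i\<close> by (metis add_2_eq_Suc le_Suc_ex)
  define l where "l = ell r (Suc j)"
  define d where "d = nat \<lceil>(1 / real r) * real l\<rceil>"
  have "3 \<le> l" unfolding l_def using \<open>r > 2\<close> by (intro ell_ge_3) simp
  then have "1 \<le> d" "d \<le> l"
    unfolding d_def using nat_ceiling_div_bounds[of r l] \<open>r > 2\<close> by auto
  moreover have "ell r i = 2 * l - d" "eps q r (i - 1) = (1 - q) ^ d" "ell r (i - 1) = l"
    unfolding i l_def d_def eps_def by simp_all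
  ultimately show ?thesis
    using T_rel_overlap_le[of q d l] assms by simp
qed

end
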